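(* Let $\mathcal{R}$ be a commutative, associative real algebra with unit, $A\in M^{\infty\times\infty}_0(\mathcal{R})$ and $g\in\mathcal{R}^\infty_0[t]$. Consider the differential equation $\frac{df}{dt}=Af+g$ for $f\in\mathcal{R}^\infty_0[t]$. (i) If $A-I$ is strictly upper triangular, the equation has a unique solution, and its coefficients depend $\mathcal{R}$-linearly on the coefficients of $g$. (ii) If $A$ is strictly upper triangular, a solution is uniquely determined by its degree-zero term $f_0\in\mathcal{R}^\infty_0$; in fact the solution depends $\mathcal{R}$-linearly on $f_0$ and the coefficients of $g$.
   Context: $\mathcal{R}^\infty_0$ denotes finitely supported sequences in $\mathcal{R}$ indexed by positive integers; $M^{\infty\times\infty}_0(\mathcal{R})$ denotes infinite matrices indexed by positive integers each of whose columns has finitely many nonzero entries; $\mathcal{R}^\infty_0[t]$ denotes polynomials in $t$ with coefficients in $\mathcal{R}^\infty_0$. *)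

theory Defs
  imports Complex_Main
begin

text \<open>Sequences in R^infty_0 are represented as functions nat => 'a (index i stands for
  the positive integer i+1); polynomials in t with coefficients in R^infty_0 are functions
  f :: nat => nat => 'a, where f k is the coefficient of t^k.\<close>

definition fin_seq :: "(nat \<Rightarrow> 'a::zero) \<Rightarrow> bool" where
  "fin_seq v \<longleftrightarrow> finite {i. v i \<noteq> 0}"

definition fin_col_mat :: "(nat \<Rightarrow> nat \<Rightarrow> 'a::zero) \<Rightarrow> bool" where
  "fin_col_mat A \<longleftrightarrow> (\<forall>j. finite {i. A i j \<noteq> 0})"

definition poly_seq :: "(nat \<Rightarrow> nat \<Rightarrow> 'a::zero) \<Rightarrow> bool" where
  "poly_seq f \<longleftrightarrow> finite {(k, i). f k i \<noteq> 0}"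

definition strict_upper :: "(nat \<Rightarrow> nat \<Rightarrow> 'a::zero) \<Rightarrow> bool" where
  "strict_upper A \<longleftrightarrow> (\<forall>i j. j \<le> i \<longrightarrow> A i j = 0)"

definition id_mat :: "nat \<Rightarrow> nat \<Rightarrow> 'a::{zero,one}" where
  "id_mat i j = (if i = j then 1 else 0)"

definition mat_sub :: "(nat \<Rightarrow> nat \<Rightarrow> 'a::minus) \<Rightarrow> (nat \<Rightarrow> nat \<Rightarrow> 'a) \<Rightarrow> nat \<Rightarrow> nat \<Rightarrow> 'a" where
  "mat_sub A B i j = A i j - B i j"

definition mat_app :: "(nat \<Rightarrow> nat \<Rightarrow> 'a::comm_ring_1) \<Rightarrow> (nat \<Rightarrow> 'a) \<Rightarrow> nat \<Rightarrow> 'a" where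
  "mat_app A v i = (\<Sum>j\<in>{j. v j \<noteq> 0}. A i j * v j)"

definition solves_ode ::
  "(nat \<Rightarrow> nat \<Rightarrow> 'a::comm_ring_1) \<Rightarrow> (nat \<Rightarrow> nat \<Rightarrow> 'a) \<Rightarrow> (nat \<Rightarrow> nat \<Rightarrow> 'a) \<Rightarrow> bool" where
  "solves_ode A g f \<longleftrightarrow>
     (\<forall>k i. of_nat (Suc k) * f (Suc k) i = mat_app A (f k) i + g k i)"

end

theory Submission
  imports Defs
begin

text \<open>Comparing coefficients of t^k, the equation says (k+1) f_{k+1} = A f_k + g_k.
  If A is strictly upper triangular, this recursion determines f from f_0 (dividing by k+1), and
  f is a polynomial because, once g has vanished, each step maps a sequence supported below M to
  one supported below M - 1.
  If A - I is strictly upper triangular, A is a bijection of R^infty_0 by back substitution, so the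
  recursion can be run backwards, starting from f_k = 0 beyond the degree of g; and the top
  coefficient of a polynomial solution of the homogeneous equation lies in the kernel of A,
  hence vanishes. In both cases linearity follows from uniqueness, since linear combinations of
  solutions are solutions.\<close>

lemma finite_nat_Collect_iff: "finite {n::nat. P n} \<longleftrightarrow> (\<exists>N. \<forall>n\<ge>N. \<not> P n)"
  unfolding finite_nat_set_iff_bounded by (meson mem_Collect_eq not_le)

lemma fin_seq_iff_bounded: "fin_seq v \<longleftrightarrow> (\<exists>M. \<forall>i\<ge>M. v i = 0)"
  by (simp add: fin_seq_def finite_nat_Collect_iff)

lemma fin_seq_add: "fin_seq u \<Longrightarrow> fin_seq v \<Longrightarrow> fin_seq (\<lambda>i. u i + (v i :: 'a::monoid_add))"
  unfolding fin_seq_def by (rule finite_subset[of _ "{i. u i \<noteq> 0} \<union> {i. v i \<noteq> 0}"]) auto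

lemma fin_seq_diff: "fin_seq u \<Longrightarrow> fin_seq v \<Longrightarrow> fin_seq (\<lambda>i. u i - (v i :: 'a::ab_group_add))"
  unfolding fin_seq_def by (rule finite_subset[of _ "{i. u i \<noteq> 0} \<union> {i. v i \<noteq> 0}"]) auto

lemma fin_seq_mult_left: "fin_seq u \<Longrightarrow> fin_seq (\<lambda>i. c * (u i :: 'a::mult_zero))"
  unfolding fin_seq_def by (rule finite_subset[of _ "{i. u i \<noteq> 0}"]) auto

lemma fin_seq_scaleR: "fin_seq u \<Longrightarrow> fin_seq (\<lambda>i. r *\<^sub>R (u i :: 'a::real_vector))"
  unfolding fin_seq_def by (rule finite_subset[of _ "{i. u i \<noteq> 0}"]) auto

lemma fin_seq_single: "fin_seq (\<lambda>i. if i = m then c else 0)"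
  unfolding fin_seq_def by (rule finite_subset[of _ "{m}"]) auto

lemma poly_seq_iff: "poly_seq f \<longleftrightarrow> (\<forall>k. fin_seq (f k)) \<and> (\<exists>N. \<forall>k\<ge>N. \<forall>i. f k i = 0)"
proof -
  let ?S = "{(k, i). f k i \<noteq> 0}" and ?K = "{k. \<exists>i. f k i \<noteq> 0}"
  have supp: "?S = Sigma ?K (\<lambda>k. {i. f k i \<noteq> 0})" and rows: "?K = fst ` ?S"
    by force+
  have "finite ?S \<longleftrightarrow> (\<forall>k. fin_seq (f k)) \<and> finite ?K"
  proof
    assume S: "finite ?S"
    have "{i. f k i \<noteq> 0} \<subseteq> snd ` ?S" for k
      by (auto intro: rev_image_eqI[of "(k, _)"])
    then have "fin_seq (f k)" for k
      unfolding fin_seq_def using S by (meson finite_imageI finite_subset)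
    then show "(\<forall>k. fin_seq (f k)) \<and> finite ?K"
      unfolding rows using S by simp
  next
    assume "(\<forall>k. fin_seq (f k)) \<and> finite ?K"
    then show "finite ?S"
      unfolding supp fin_seq_def by (intro finite_SigmaI) auto
  qed
  then show ?thesis
    by (simp add: poly_seq_def finite_nat_Collect_iff)
qed

lemma poly_seq_imp_fin_seq: "poly_seq f \<Longrightarrow> fin_seq (f k)"
  by (simp add: poly_seq_iff)

lemma poly_seq_lincomb:
  "poly_seq f \<Longrightarrow> poly_seq g \<Longrightarrow> poly_seq (\<lambda>k i. c * f k i + (g k i :: 'a::comm_ring_1))"
  unfolding poly_seq_def
  by (rule finite_subset[of _ "{(k, i). f k i \<noteq> 0} \<union> {(k, i). g k i \<noteq> 0}"]) auto

lemma mat_app_eq_sum: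
  assumes "finite S" "{j. v j \<noteq> 0} \<subseteq> S"
  shows "mat_app A v i = (\<Sum>j\<in>S. A i j * v j)"
  unfolding mat_app_def by (rule sum.mono_neutral_left) (use assms in auto)

lemma mat_app_zero [simp]: "mat_app A (\<lambda>j. 0) i = 0"
  by (simp add: mat_app_def)

lemma mat_app_single: "mat_app A (\<lambda>j. if j = m then c else 0) i = A i m * c"
  by (subst mat_app_eq_sum[of "{m}"]) auto

lemma mat_app_lincomb:
  assumes "fin_seq u" "fin_seq v"
  shows "mat_app A (\<lambda>j. c * u j + v j) i = c * mat_app A u i + mat_app A v i"
proof -
  let ?S = "{j. u j \<noteq> 0} \<union> {j. v j \<noteq> 0}"
  have S: "finite ?S"
    using assms unfolding fin_seq_def by blast
  have "mat_app A (\<lambda>j. c * u j + v j) i = (\<Sum>j\<in>?S. A i j * (c * u j + v j))"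
    by (rule mat_app_eq_sum[OF S]) auto
  also have "\<dots> = c * (\<Sum>j\<in>?S. A i j * u j) + (\<Sum>j\<in>?S. A i j * v j)"
    by (simp add: sum_distrib_left sum.distrib algebra_simps)
  also have "\<dots> = c * mat_app A u i + mat_app A v i"
    by (simp add: mat_app_eq_sum[OF S])
  finally show ?thesis .
qed

lemma fin_seq_mat_app:
  assumes "fin_col_mat A" "fin_seq v"
  shows "fin_seq (mat_app A v)"
proof -
  have "{i. mat_app A v i \<noteq> 0} \<subseteq> (\<Union>j\<in>{j. v j \<noteq> 0}. {i. A i j \<noteq> 0})"
  proof
    fix i
    assume "i \<in> {i. mat_app A v i \<noteq> 0}"
    then obtain j where "v j \<noteq> 0" "A i j * v j \<noteq> 0"
      unfolding mat_app_def by (blast dest: sum.not_neutral_contains_not_neutral)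
    then show "i \<in> (\<Union>j\<in>{j. v j \<noteq> 0}. {i. A i j \<noteq> 0})"
      by auto
  qed
  moreover have "finite (\<Union>j\<in>{j. v j \<noteq> 0}. {i. A i j \<noteq> 0})"
    using assms unfolding fin_seq_def fin_col_mat_def by blast
  ultimately show ?thesis
    unfolding fin_seq_def by (rule finite_subset)
qed

lemma strict_upper_mat_app_eq_0:
  assumes "strict_upper A" "\<forall>j>i. v j = 0"
  shows "mat_app A v i = 0"
  unfolding mat_app_def
proof (intro sum.neutral ballI)
  fix j
  assume "j \<in> {j. v j \<noteq> 0}"
  then have "j \<le> i"
    using assms(2) not_le by blast
  then show "A i j * v j = 0"
    using assms(1) by (simp add: strict_upper_def)
qed

lemma unitriangularD:
  fixes A :: "nat \<Rightarrow> nat \<Rightarrow> 'a::comm_ring_1"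
  assumes "strict_upper (mat_sub A id_mat)"
  shows "A i i = 1" and "j < i \<Longrightarrow> A i j = 0"
proof -
  have "A i j - id_mat i j = 0" if "j \<le> i" for i j
    using assms that unfolding strict_upper_def mat_sub_def by blast
  then have lower: "A i j = id_mat i j" if "j \<le> i" for i j
    using that by simp
  show "A i i = 1"
    using lower[of i i] by (simp add: id_mat_def)
  show "j < i \<Longrightarrow> A i j = 0"
    using lower[of j i] by (simp add: id_mat_def)
qed

lemma unitriangular_mat_app_last:
  fixes A :: "nat \<Rightarrow> nat \<Rightarrow> 'a::comm_ring_1"
  assumes "strict_upper (mat_sub A id_mat)" "\<forall>j>m. v j = 0"
  shows "mat_app A v m = v m"
proof -
  have "{j. v j \<noteq> 0} \<subseteq> {..m}"
    using assms(2) not_le by auto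
  then have "mat_app A v m = (\<Sum>j\<le>m. A m j * v j)"
    by (intro mat_app_eq_sum) auto
  also have "\<dots> = (\<Sum>j\<le>m. if j = m then v m else 0)"
  proof (rule sum.cong)
    fix j
    assume "j \<in> {..m}"
    then consider "j = m" | "j < m"
      by fastforce
    then show "A m j * v j = (if j = m then v m else 0)"
      by cases (simp_all add: unitriangularD[OF assms(1)])
  qed simp
  finally show ?thesis
    by simp
qed

lemma unitriangular_mat_app_eq_0D:
  fixes A :: "nat \<Rightarrow> nat \<Rightarrow> 'a::comm_ring_1"
  assumes "strict_upper (mat_sub A id_mat)" "fin_seq v" "\<forall>i. mat_app A v i = 0"
  shows "v i = 0"
proof (rule ccontr)
  assume "v i \<noteq> 0"
  moreover obtain M where "\<forall>j\<ge>M. v j = 0"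
    using assms(2) fin_seq_iff_bounded by blast
  then have "\<forall>j. v j \<noteq> 0 \<longrightarrow> j \<le> M"
    by (meson nat_le_linear)
  ultimately obtain m where "v m \<noteq> 0" "\<forall>j. v j \<noteq> 0 \<longrightarrow> j \<le> m"
    using Nat.ex_has_greatest_nat[of "\<lambda>j. v j \<noteq> 0"] by blast
  then have "mat_app A v m = v m"
    by (intro unitriangular_mat_app_last[OF assms(1)]) (meson not_le)
  with \<open>v m \<noteq> 0\<close> assms(3) show False
    by simp
qed

lemma unitriangular_mat_app_surj:
  fixes A :: "nat \<Rightarrow> nat \<Rightarrow> 'a::comm_ring_1"
  assumes U: "strict_upper (mat_sub A id_mat)" and "fin_seq w"
  shows "\<exists>v. fin_seq v \<and> mat_app A v = w"
proof -
  obtain M where "\<forall>i\<ge>M. w i = 0"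
    using assms(2) fin_seq_iff_bounded by blast
  then show ?thesis
  proof (induction M arbitrary: w)
    case 0
    then have "w = (\<lambda>i. 0)"
      by auto
    then show ?case
      by (intro exI[of _ "\<lambda>j. 0"]) (simp add: fin_seq_def fun_eq_iff)
  next
    case (Suc m)
    \<comment> \<open>Back substitution: clear entry m with column m, whose diagonal entry is 1.\<close>
    define w' where "w' i = w i - A i m * w m" for i
    have "w' i = 0" if "m \<le> i" for i
    proof (cases "i = m")
      case True
      then show ?thesis
        by (simp add: w'_def unitriangularD[OF U])
    next
      case False
      with that have "m < i" "Suc m \<le> i"
        by simp_all
      then show ?thesis
        using Suc.prems by (simp add: w'_def unitriangularD[OF U])
    qed
    then obtain v' where v': "fin_seq v'" "mat_app A v' = w'"
      using Suc.IH by blast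
    let ?v = "\<lambda>j. (if j = m then w m else 0) + v' j"
    have "mat_app A ?v i = w i" for i
      using mat_app_lincomb[OF fin_seq_single[of m "w m"] v'(1), of A 1 i] v'(2)
      by (simp add: mat_app_single w'_def)
    moreover have "fin_seq ?v"
      using fin_seq_add[OF fin_seq_single v'(1)] by simp
    ultimately show ?case
      by blast
  qed
qed

lemma solves_ode_lincomb:
  fixes A :: "nat \<Rightarrow> nat \<Rightarrow> 'a::comm_ring_1"
  assumes "\<And>k. fin_seq (f1 k)" "\<And>k. fin_seq (f2 k)"
    and "solves_ode A g1 f1" "solves_ode A g2 f2"
  shows "solves_ode A (\<lambda>k i. c * g1 k i + g2 k i) (\<lambda>k i. c * f1 k i + f2 k i)"
  unfolding solves_ode_def
proof (intro allI)
  fix k i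
  have "of_nat (Suc k) * (c * f1 (Suc k) i + f2 (Suc k) i)
      = c * (of_nat (Suc k) * f1 (Suc k) i) + of_nat (Suc k) * f2 (Suc k) i"
    by (simp add: algebra_simps)
  also have "\<dots> = c * (mat_app A (f1 k) i + g1 k i) + (mat_app A (f2 k) i + g2 k i)"
    using assms(3,4) by (simp add: solves_ode_def)
  also have "\<dots> = c * mat_app A (f1 k) i + mat_app A (f2 k) i + (c * g1 k i + g2 k i)"
    by (simp add: algebra_simps)
  also have "\<dots> = mat_app A (\<lambda>j. c * f1 k j + f2 k j) i + (c * g1 k i + g2 k i)"
    by (simp add: mat_app_lincomb assms(1,2))
  finally show "of_nat (Suc k) * (c * f1 (Suc k) i + f2 (Suc k) i)
      = mat_app A (\<lambda>j. c * f1 k j + f2 k j) i + (c * g1 k i + g2 k i)" .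
qed

text \<open>The induction on the degree bound N passes to the tail (f_{k+1})_k, which satisfies the
  same recursion with every factor k+1 raised by one; hence the shift s.\<close>

lemma unitriangular_shifted_ode_solvable:
  fixes A :: "nat \<Rightarrow> nat \<Rightarrow> 'a::comm_ring_1"
  assumes U: "strict_upper (mat_sub A id_mat)"
    and "\<forall>k. fin_seq (g k)" "\<forall>k\<ge>N. \<forall>i. g k i = 0"
  shows "\<exists>f. (\<forall>k. fin_seq (f k)) \<and> (\<forall>k\<ge>N. \<forall>i. f k i = 0) \<and>
    (\<forall>k i. of_nat (s + Suc k) * f (Suc k) i = mat_app A (f k) i + g k i)"
  using assms(2,3)
proof (induction N arbitrary: s g)
  case 0
  then show ?case
    by (intro exI[of _ "\<lambda>k i. 0"]) (simp add: fin_seq_def)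
next
  case (Suc N)
  obtain f' where f': "\<forall>k. fin_seq (f' k)" "\<forall>k\<ge>N. \<forall>i. f' k i = 0"
    and eq': "\<forall>k i. of_nat (Suc s + Suc k) * f' (Suc k) i = mat_app A (f' k) i + g (Suc k) i"
    using Suc.IH[of "\<lambda>k. g (Suc k)" "Suc s"] Suc.prems by auto
  have "fin_seq (\<lambda>i. of_nat (Suc s) * f' 0 i - g 0 i)"
    using f'(1) Suc.prems(1) by (simp add: fin_seq_diff fin_seq_mult_left)
  then obtain v where v: "fin_seq v" "mat_app A v = (\<lambda>i. of_nat (Suc s) * f' 0 i - g 0 i)"
    using unitriangular_mat_app_surj[OF U] by blast
  let ?f = "\<lambda>k. case k of 0 \<Rightarrow> v | Suc k \<Rightarrow> f' k"
  have "of_nat (s + Suc k) * ?f (Suc k) i = mat_app A (?f k) i + g k i" for k i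
    using v(2) eq' by (cases k) simp_all
  moreover have "\<forall>k. fin_seq (?f k)" "\<forall>k\<ge>Suc N. \<forall>i. ?f k i = 0"
    using f' v(1) by (auto split: nat.split)
  ultimately show ?case
    by blast
qed

lemma unitriangular_ode_homogeneous_unique:
  fixes A :: "nat \<Rightarrow> nat \<Rightarrow> 'a::comm_ring_1"
  assumes U: "strict_upper (mat_sub A id_mat)"
    and "poly_seq h" "solves_ode A (\<lambda>k i. 0) h"
  shows "h k i = 0"
proof (rule ccontr)
  assume "h k i \<noteq> 0"
  then have "\<exists>i. h k i \<noteq> 0"
    by blast
  moreover obtain N where "\<forall>k\<ge>N. \<forall>i. h k i = 0"
    using assms(2) poly_seq_iff by blast
  then have "\<forall>k. (\<exists>i. h k i \<noteq> 0) \<longrightarrow> k \<le> N"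
    by (meson nat_le_linear)
  ultimately obtain m where top: "\<exists>i. h m i \<noteq> 0" "\<forall>k. (\<exists>i. h k i \<noteq> 0) \<longrightarrow> k \<le> m"
    using Nat.ex_has_greatest_nat[of "\<lambda>k. \<exists>i. h k i \<noteq> 0"] by blast
  then have "h (Suc m) j = 0" for j
    by fastforce
  then have "mat_app A (h m) j = 0" for j
    using assms(3) unfolding solves_ode_def by (metis add.right_neutral mult_zero_right)
  then have "h m j = 0" for j
    using unitriangular_mat_app_eq_0D[OF U] assms(2) poly_seq_iff by blast
  with top(1) show False
    by blast
qed

definition poly_ode_solution ::
  "(nat \<Rightarrow> nat \<Rightarrow> 'a::comm_ring_1) \<Rightarrow> (nat \<Rightarrow> nat \<Rightarrow> 'a) \<Rightarrow> nat \<Rightarrow> nat \<Rightarrow> 'a" where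
  "poly_ode_solution A g = (THE f. poly_seq f \<and> solves_ode A g f)"

lemma unitriangular_ode_unique_solution:
  fixes A :: "nat \<Rightarrow> nat \<Rightarrow> 'a::comm_ring_1"
  assumes U: "strict_upper (mat_sub A id_mat)" and g: "poly_seq g"
  shows "\<exists>!f. poly_seq f \<and> solves_ode A g f"
proof (rule ex_ex1I)
  obtain N where "\<forall>k. fin_seq (g k)" "\<forall>k\<ge>N. \<forall>i. g k i = 0"
    using g poly_seq_iff by blast
  then show "\<exists>f. poly_seq f \<and> solves_ode A g f"
    using unitriangular_shifted_ode_solvable[OF U, of g N 0]
    by (auto simp: poly_seq_iff solves_ode_def)
next
  fix f1 f2
  assume f1: "poly_seq f1 \<and> solves_ode A g f1" and f2: "poly_seq f2 \<and> solves_ode A g f2"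
  have "solves_ode A (\<lambda>k i. (-1) * g k i + g k i) (\<lambda>k i. (-1) * f1 k i + f2 k i)"
    using f1 f2 by (intro solves_ode_lincomb) (simp_all add: poly_seq_imp_fin_seq)
  moreover have "poly_seq (\<lambda>k i. (-1) * f1 k i + f2 k i)"
    using f1 f2 poly_seq_lincomb by blast
  ultimately have "f2 k i - f1 k i = 0" for k i
    using unitriangular_ode_homogeneous_unique[OF U, of "\<lambda>k i. (-1) * f1 k i + f2 k i"] by simp
  then show "f1 = f2"
    by (simp add: fun_eq_iff)
qed

lemma poly_ode_solution:
  fixes A :: "nat \<Rightarrow> nat \<Rightarrow> 'a::comm_ring_1"
  assumes "strict_upper (mat_sub A id_mat)" "poly_seq g"
  shows "poly_seq (poly_ode_solution A g)" and "solves_ode A g (poly_ode_solution A g)"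
  using theI'[OF unitriangular_ode_unique_solution[OF assms]]
  unfolding poly_ode_solution_def by blast+

lemma poly_ode_solution_unique:
  fixes A :: "nat \<Rightarrow> nat \<Rightarrow> 'a::comm_ring_1"
  assumes "strict_upper (mat_sub A id_mat)" "poly_seq g" "poly_seq f" "solves_ode A g f"
  shows "f = poly_ode_solution A g"
  unfolding poly_ode_solution_def
  using the1_equality[OF unitriangular_ode_unique_solution[OF assms(1,2)]] assms(3,4) by simp

lemma poly_ode_solution_lincomb:
  fixes A :: "nat \<Rightarrow> nat \<Rightarrow> 'a::comm_ring_1"
  assumes U: "strict_upper (mat_sub A id_mat)" and "poly_seq g1" "poly_seq g2"
  shows "poly_ode_solution A (\<lambda>k i. c * g1 k i + g2 k i)
    = (\<lambda>k i. c * poly_ode_solution A g1 k i + poly_ode_solution A g2 k i)"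
  using assms poly_ode_solution[OF U]
  by (intro poly_ode_solution_unique[symmetric] poly_seq_lincomb solves_ode_lincomb)
    (auto intro: poly_seq_imp_fin_seq)

lemma of_nat_Suc_mult_eq_iff:
  "of_nat (Suc n) * x = y \<longleftrightarrow> x = inverse (real (Suc n)) *\<^sub>R (y :: 'a::real_algebra_1)"
proof -
  have "of_nat (Suc n) * x = real (Suc n) *\<^sub>R x"
    by (simp add: scaleR_conv_of_real)
  moreover have "real (Suc n) *\<^sub>R x = y \<longleftrightarrow> x = inverse (real (Suc n)) *\<^sub>R y"
    by (auto simp: scaleR_scaleR simp del: of_nat_Suc)
  ultimately show ?thesis
    by simp
qed

primrec ivp_solution ::
  "(nat \<Rightarrow> nat \<Rightarrow> 'a::{comm_ring_1, real_algebra_1}) \<Rightarrow> (nat \<Rightarrow> 'a) \<Rightarrow> (nat \<Rightarrow> nat \<Rightarrow> 'a)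
    \<Rightarrow> nat \<Rightarrow> nat \<Rightarrow> 'a" where
  "ivp_solution A f0 g 0 = f0"
| "ivp_solution A f0 g (Suc k) =
    (\<lambda>i. inverse (real (Suc k)) *\<^sub>R (mat_app A (ivp_solution A f0 g k) i + g k i))"

lemma ivp_solution_solves: "solves_ode A g (ivp_solution A f0 g)"
  unfolding solves_ode_def of_nat_Suc_mult_eq_iff by simp

lemma ivp_solution_unique:
  assumes "solves_ode A g f" "f 0 = f0"
  shows "f = ivp_solution A f0 g"
proof
  fix k
  show "f k = ivp_solution A f0 g k"
  proof (induction k)
    case 0
    then show ?case
      using assms(2) by simp
  next
    case (Suc k)
    have "f (Suc k) i = inverse (real (Suc k)) *\<^sub>R (mat_app A (f k) i + g k i)" for i
      using assms(1) unfolding solves_ode_def of_nat_Suc_mult_eq_iff by blast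
    then show ?case
      using Suc.IH by auto
  qed
qed

lemma fin_seq_ivp_solution:
  assumes "fin_col_mat A" "fin_seq f0" "\<And>k. fin_seq (g k)"
  shows "fin_seq (ivp_solution A f0 g k)"
  by (induction k) (simp_all add: assms fin_seq_scaleR fin_seq_add fin_seq_mat_app)

lemma poly_seq_ivp_solution:
  assumes A: "fin_col_mat A" "strict_upper A" and "fin_seq f0" "poly_seq g"
  shows "poly_seq (ivp_solution A f0 g)"
proof -
  let ?f = "ivp_solution A f0 g"
  obtain N where N: "\<forall>k\<ge>N. \<forall>i. g k i = 0"
    using assms(4) poly_seq_iff by blast
  have fin: "fin_seq (?f k)" for k
    using fin_seq_ivp_solution[OF A(1) assms(3)] assms(4) poly_seq_imp_fin_seq by blast
  obtain M where M: "\<forall>i\<ge>M. ?f N i = 0"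
    using fin fin_seq_iff_bounded by blast
  have vanish: "\<forall>i. M \<le> n + i \<longrightarrow> ?f (N + n) i = 0" for n
  proof (induction n)
    case 0
    then show ?case
      using M by simp
  next
    case (Suc n)
    show ?case
    proof (intro allI impI)
      fix i
      assume "M \<le> Suc n + i"
      then have "mat_app A (?f (N + n)) i = 0"
        using Suc.IH by (intro strict_upper_mat_app_eq_0[OF A(2)]) auto
      then show "?f (N + Suc n) i = 0"
        using N by simp
    qed
  qed
  have "?f k i = 0" if "N + M \<le> k" for k i
  proof -
    from that have "k = N + (k - N)" "M \<le> (k - N) + i"
      by simp_all
    then show ?thesis
      using vanish by metis
  qed
  then show ?thesis
    using fin poly_seq_iff by blast
qed

lemma ivp_solution_lincomb:
  assumes "fin_col_mat A" "fin_seq f0" "fin_seq f0'" "\<And>k. fin_seq (g1 k)" "\<And>k. fin_seq (g2 k)"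
  shows "ivp_solution A (\<lambda>i. c * f0 i + f0' i) (\<lambda>k i. c * g1 k i + g2 k i)
    = (\<lambda>k i. c * ivp_solution A f0 g1 k i + ivp_solution A f0' g2 k i)"
proof (rule ivp_solution_unique[symmetric])
  show "solves_ode A (\<lambda>k i. c * g1 k i + g2 k i)
      (\<lambda>k i. c * ivp_solution A f0 g1 k i + ivp_solution A f0' g2 k i)"
    using assms by (intro solves_ode_lincomb ivp_solution_solves fin_seq_ivp_solution)
qed simp

theorem lemma6p2:
  fixes A :: "nat \<Rightarrow> nat \<Rightarrow> 'a::{comm_ring_1, real_algebra_1}"
  assumes "fin_col_mat A"
  shows
   "(strict_upper (mat_sub A id_mat) \<longrightarrow>
      (\<exists>S. (\<forall>g. poly_seq g \<longrightarrow>
               poly_seq (S g) \<and> solves_ode A g (S g) \<and>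
               (\<forall>f. poly_seq f \<and> solves_ode A g f \<longrightarrow> f = S g)) \<and>
           (\<forall>c g1 g2. poly_seq g1 \<longrightarrow> poly_seq g2 \<longrightarrow>
               S (\<lambda>k i. c * g1 k i + g2 k i) = (\<lambda>k i. c * S g1 k i + S g2 k i))))
    \<and>
    (strict_upper A \<longrightarrow>
      (\<exists>S. (\<forall>f0 g. fin_seq f0 \<longrightarrow> poly_seq g \<longrightarrow>
               poly_seq (S f0 g) \<and> solves_ode A g (S f0 g) \<and> S f0 g 0 = f0 \<and>
               (\<forall>f. poly_seq f \<and> solves_ode A g f \<and> f 0 = f0 \<longrightarrow> f = S f0 g)) \<and>
           (\<forall>c f0 f0' g1 g2. fin_seq f0 \<longrightarrow> fin_seq f0' \<longrightarrow> poly_seq g1 \<longrightarrow> poly_seq g2 \<longrightarrow>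
               S (\<lambda>i. c * f0 i + f0' i) (\<lambda>k i. c * g1 k i + g2 k i)
                 = (\<lambda>k i. c * S f0 g1 k i + S f0' g2 k i))))"
  apply (intro conjI impI)
  subgoal
    by (intro exI[of _ "poly_ode_solution A"])
      (simp add: poly_ode_solution poly_ode_solution_unique poly_ode_solution_lincomb)
  subgoal
    using assms
    by (intro exI[of _ "ivp_solution A"])
      (auto simp: ivp_solution_solves poly_seq_ivp_solution ivp_solution_lincomb poly_seq_imp_fin_seq
        intro: ivp_solution_unique)
  done

end
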